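(* For every integer $k\ge 2$ and every positive integer $n$, \[ t_{2k}(n)\le \frac{2k-3}{3}\,\mathrm{ex}(n, C_{2k}). \]
   Context: All graphs are simple. For a graph $G$, $t(G)$ denotes the number of triangles of $G$. A graph is $F$-free if it contains no (not necessarily induced) subgraph isomorphic to $F$. For $\ell\ge 3$, $t_\ell(n)$ is the maximum of $t(G)$ over all $C_\ell$-free graphs on $n$ vertices, $C_\ell$ being the cycle of length $\ell$. $\mathrm{ex}(n,F)$ is the maximum number of edges of an $F$-free graph on $n$ vertices. *)

theory Defs
  imports Complex_Main
begin

definition graphs_on :: "nat \<Rightarrow> nat set set set" where
  "graphs_on n = Pow {e. e \<subseteq> {..<n} \<and> card e = 2}"

definition triangles :: "nat set set \<Rightarrow> nat set set" where
  "triangles G = {T. \<exists>a b c. T = {a, b, c} \<and> a \<noteq> b \<and> b \<noteq> c \<and> a \<noteq> c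
                         \<and> {a, b} \<in> G \<and> {b, c} \<in> G \<and> {a, c} \<in> G}"

definition num_triangles :: "nat set set \<Rightarrow> nat" where
  "num_triangles G = card (triangles G)"

definition has_cycle :: "nat \<Rightarrow> nat set set \<Rightarrow> bool" where
  "has_cycle l G = (\<exists>vs. length vs = l \<and> distinct vs \<and>
       (\<forall>i<l. {vs ! i, vs ! ((i + 1) mod l)} \<in> G))"

definition cycle_free :: "nat \<Rightarrow> nat set set \<Rightarrow> bool" where
  "cycle_free l G = (\<not> has_cycle l G)"

definition t_cyc :: "nat \<Rightarrow> nat \<Rightarrow> nat" where
  "t_cyc l n = Max (num_triangles ` {G \<in> graphs_on n. cycle_free l G})"

definition ex_cyc :: "nat \<Rightarrow> nat \<Rightarrow> nat" where
  "ex_cyc n l = Max (card ` {G \<in> graphs_on n. cycle_free l G})"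

end

theory Submission
  imports Defs
begin

text \<open>The triangles through a vertex v correspond to the edges of its link, the graph on the
  neighbourhood N(v) formed by the edges of G inside N(v). A path on 2k-1 vertices in the link
  closes up through v to a cycle of length 2k, so by the Erdos-Gallai theorem for paths each
  link has at most (2k-3)|N(v)|/2 edges. Summing over v counts every triangle three times and
  every edge twice, giving 3 t(G) \<le> (2k-3) e(G).

  Erdos-Gallai is proved by induction on the number of vertices: take a longest path P.
  If an end of P has at most (l-1)/2 neighbours, delete that vertex. Otherwise both ends
  have all their neighbours on P and enough of them to force crossing edges, so V(P) carries a
  spanning cycle; maximality of P then makes V(P) a union of components, which can be removed,
  since it spans at most |P|(|P|-1)/2 \<le> |P|(l-1)/2 edges.\<close>

definition neighbours :: "'a set set \<Rightarrow> 'a \<Rightarrow> 'a set" where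
  "neighbours E x = {y. {x, y} \<in> E}"

definition path :: "'a set set \<Rightarrow> 'a list \<Rightarrow> bool" where
  "path E xs \<longleftrightarrow> distinct xs \<and> successively (\<lambda>x y. {x, y} \<in> E) xs"

lemma path_mono: "E \<subseteq> F \<Longrightarrow> path E xs \<Longrightarrow> path F xs"
  unfolding path_def by (auto elim: successively_mono)

lemma path_take: "path E xs \<Longrightarrow> path E (take n xs)"
  unfolding path_def using successively_append_iff[of _ "take n xs" "drop n xs"] by simp

lemma path_rev [simp]: "path E (rev xs) \<longleftrightarrow> path E xs"
  by (simp add: path_def insert_commute)

lemma path_Cons:
  "path E (x # xs) \<longleftrightarrow> x \<notin> set xs \<and> path E xs \<and> (xs \<noteq> [] \<longrightarrow> {x, hd xs} \<in> E)"
  by (auto simp: path_def successively_Cons)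

lemma not_in_neighbours_self: "\<forall>e\<in>E. card e = 2 \<Longrightarrow> x \<notin> neighbours E x"
  by (auto simp: neighbours_def)

lemma card_edges_at_vertex:
  assumes "\<forall>e\<in>E. card e = 2"
  shows "card {e\<in>E. x \<in> e} = card (neighbours E x)"
proof -
  have "{e\<in>E. x \<in> e} = (\<lambda>y. {x, y}) ` neighbours E x"
  proof (intro equalityI subsetI)
    fix e assume "e \<in> {e\<in>E. x \<in> e}"
    then have e: "e \<in> E" "x \<in> e" by auto
    then obtain a b where "e = {a, b}" "a \<noteq> b" using assms card_2_iff by metis
    then have "e = {x, if x = a then b else a}" using e by auto
    then show "e \<in> (\<lambda>y. {x, y}) ` neighbours E x" using e by (auto simp: neighbours_def)
  qed (auto simp: neighbours_def)
  moreover have "inj_on (\<lambda>y. {x, y}) (neighbours E x)"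
    using not_in_neighbours_self[OF assms] by (auto simp: inj_on_def neighbours_def doubleton_eq_iff)
  ultimately show ?thesis by (simp add: card_image)
qed

lemma card_edges_within:
  assumes "finite C" "\<forall>e\<in>E. card e = 2"
  shows "2 * card {e\<in>E. e \<subseteq> C} \<le> card C * (card C - 1)"
proof -
  have "finite (Pow C)" using assms(1) by simp
  then have "card {e\<in>E. e \<subseteq> C} \<le> card {B. B \<subseteq> C \<and> card B = 2}"
    using assms(2) by (intro card_mono) (auto elim: rev_finite_subset)
  also have "\<dots> = card C * (card C - 1) div 2"
    using assms(1) by (simp add: n_subsets choose_two)
  finally show ?thesis by linarith
qed

lemma sum_card_containing:
  assumes "finite V" "finite S" "\<forall>T\<in>S. T \<subseteq> V"
  shows "(\<Sum>v\<in>V. card {T\<in>S. v \<in> T}) = (\<Sum>T\<in>S. card T)"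
proof -
  have "(\<Sum>v\<in>V. card {T\<in>S. v \<in> T}) = (\<Sum>v\<in>V. \<Sum>T\<in>S. if v \<in> T then 1 else 0)"
    using assms(2) by (simp add: sum.inter_filter[symmetric])
  also have "\<dots> = (\<Sum>T\<in>S. \<Sum>v\<in>V. if v \<in> T then 1 else 0)" by (rule sum.swap)
  also have "\<dots> = (\<Sum>T\<in>S. card {v\<in>V. v \<in> T})"
    using assms(1) by (simp add: sum.inter_filter[symmetric])
  also have "\<dots> = (\<Sum>T\<in>S. card T)"
    using assms(3) by (intro sum.cong) (auto intro: arg_cong[where f = card])
  finally show ?thesis .
qed

definition closed_path :: "'a set set \<Rightarrow> 'a list \<Rightarrow> bool" where
  "closed_path E cs \<longleftrightarrow> path E cs \<and> cs \<noteq> [] \<and> {last cs, hd cs} \<in> E"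

definition longest_path :: "'a set set \<Rightarrow> 'a set \<Rightarrow> 'a list \<Rightarrow> bool" where
  "longest_path E V ps \<longleftrightarrow> path E ps \<and> set ps \<subseteq> V \<and>
     (\<forall>qs. path E qs \<and> set qs \<subseteq> V \<longrightarrow> length qs \<le> length ps)"

lemma path_length: "path E xs \<Longrightarrow> length xs = card (set xs)"
  by (simp add: path_def distinct_card)

lemma longest_path_rev [simp]: "longest_path E V (rev ps) \<longleftrightarrow> longest_path E V ps"
  by (simp add: longest_path_def)

lemma longest_path_exists:
  assumes "finite V" "path E xs" "set xs \<subseteq> V"
  obtains ps where "longest_path E V ps" "length xs \<le> length ps"
proof -
  let ?P = "\<lambda>ps. path E ps \<and> set ps \<subseteq> V"
  have "\<forall>ps. ?P ps \<longrightarrow> length ps < Suc (card V)"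
    using assms(1) by (auto simp: path_length card_mono less_Suc_eq_le)
  then obtain ps where "?P ps" "\<forall>qs. ?P qs \<longrightarrow> length qs \<le> length ps"
    using ex_has_greatest_nat[of ?P xs length] assms(2,3) by blast
  then have "longest_path E V ps" by (simp add: longest_path_def)
  moreover have "length xs \<le> length ps" using calculation assms(2,3) by (simp add: longest_path_def)
  ultimately show thesis by (rule that)
qed

lemma longest_path_hd_neighbours:
  assumes "longest_path E V ps" "ps \<noteq> []" "\<forall>e\<in>E. e \<subseteq> V"
  shows "neighbours E (hd ps) \<subseteq> set ps"
proof
  fix u assume u: "u \<in> neighbours E (hd ps)"
  show "u \<in> set ps"
  proof (rule ccontr)
    assume "u \<notin> set ps"
    with u assms have "path E (u # ps) \<and> set (u # ps) \<subseteq> V"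
      by (auto simp: longest_path_def path_Cons neighbours_def insert_commute)
    with assms(1) show False by (fastforce simp: longest_path_def)
  qed
qed

lemma closed_path_rotate:
  assumes "closed_path E cs" "x \<in> set cs"
  obtains qs where "path E qs" "set qs = set cs" "length qs = length cs" "hd qs = x"
proof -
  obtain r where r: "r < length cs" "cs ! r = x" using assms(2) by (metis in_set_conv_nth)
  define pre suf where "pre = take r cs" and "suf = drop r cs"
  have cs: "cs = pre @ suf" by (simp add: pre_def suf_def)
  have "pre \<noteq> [] \<Longrightarrow> {last suf, hd pre} \<in> E"
    using assms(1) r(1) by (simp add: closed_path_def pre_def suf_def)
  then have "path E (suf @ pre)"
    using assms(1) unfolding cs closed_path_def path_def successively_append_iff by auto
  moreover have "set (suf @ pre) = set cs" using cs by auto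
  moreover have "length (suf @ pre) = length cs" using cs by simp
  moreover have "hd (suf @ pre) = x" using r by (simp add: suf_def hd_drop_conv_nth)
  ultimately show thesis by (rule that)
qed

lemma path_crossing_closed_path:
  assumes "path E ps" "Suc i < length ps" "{hd ps, ps ! Suc i} \<in> E" "{last ps, ps ! i} \<in> E"
  shows "\<exists>cs. closed_path E cs \<and> set cs = set ps"
proof -
  define pre suf where "pre = take (Suc i) ps" and "suf = drop (Suc i) ps"
  have ps: "ps = pre @ suf" by (simp add: pre_def suf_def)
  have "last pre = ps ! i" using assms(2) unfolding pre_def by (subst last_conv_nth) auto
  then have pre: "pre \<noteq> []" "hd pre = hd ps" "last pre = ps ! i"
    using assms(2) by (auto simp: pre_def)
  have suf: "suf \<noteq> []" "hd suf = ps ! Suc i" "last suf = last ps"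
    using assms(2) unfolding suf_def by (simp_all add: hd_drop_conv_nth)
  have "distinct (pre @ suf)" "successively (\<lambda>x y. {x, y} \<in> E) pre"
    "successively (\<lambda>x y. {x, y} \<in> E) suf"
    using assms(1) unfolding ps path_def successively_append_iff by auto
  then have "path E (pre @ rev suf)"
    using assms(4) pre suf by (simp add: path_def successively_append_iff hd_rev insert_commute)
  moreover have "last (pre @ rev suf) = ps ! Suc i" "hd (pre @ rev suf) = hd ps"
    using pre suf by (simp_all add: last_rev)
  ultimately have "closed_path E (pre @ rev suf)"
    using assms(3) pre(1) by (simp add: closed_path_def insert_commute)
  moreover have "set (pre @ rev suf) = set ps" using ps by simp
  ultimately show ?thesis by blast
qed

lemma longest_path_neighbours_of_closed_path:
  assumes "longest_path E V ps" "\<forall>e\<in>E. e \<subseteq> V" "closed_path E cs" "set cs = set ps"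
    and "x \<in> set ps"
  shows "neighbours E x \<subseteq> set ps"
proof -
  obtain qs where qs: "path E qs" "set qs = set ps" "length qs = length cs" "hd qs = x"
    using closed_path_rotate[OF assms(3)] assms(4,5) by metis
  have "length cs = length ps"
    using assms(1,3,4) path_length unfolding closed_path_def longest_path_def by metis
  with qs assms(1) have "longest_path E V qs" by (simp add: longest_path_def)
  moreover have "qs \<noteq> []" using qs(2) assms(5) by auto
  ultimately show ?thesis using longest_path_hd_neighbours[OF _ _ assms(2)] qs by metis
qed

lemma path_crossing_edges_exist:
  assumes "path E ps" "ps \<noteq> []" "\<forall>e\<in>E. card e = 2"
    and "neighbours E (hd ps) \<subseteq> set ps" "neighbours E (last ps) \<subseteq> set ps"
    and "length ps \<le> card (neighbours E (hd ps)) + card (neighbours E (last ps))"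
  shows "\<exists>i. Suc i < length ps \<and> {hd ps, ps ! Suc i} \<in> E \<and> {last ps, ps ! i} \<in> E"
proof -
  obtain m where m: "length ps = Suc m" using assms(2) by (cases ps) auto
  have hd: "hd ps = ps ! 0" and last: "last ps = ps ! m"
    using assms(2) m by (simp_all add: hd_conv_nth last_conv_nth)
  have dist: "distinct ps" using assms(1) by (simp add: path_def)
  define S where "S = {i. i < m \<and> {hd ps, ps ! Suc i} \<in> E}"
  define T where "T = {i. i < m \<and> {last ps, ps ! i} \<in> E}"
  have "neighbours E (hd ps) = (\<lambda>i. ps ! Suc i) ` S"
  proof (intro equalityI subsetI)
    fix u assume u: "u \<in> neighbours E (hd ps)"
    then obtain j where j: "j < length ps" "ps ! j = u" using assms(4) by (metis in_set_conv_nth subsetD)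
    moreover have "j \<noteq> 0" using j u hd not_in_neighbours_self[OF assms(3)] by metis
    ultimately show "u \<in> (\<lambda>i. ps ! Suc i) ` S"
      using u m by (auto simp: S_def neighbours_def gr0_conv_Suc)
  qed (auto simp: S_def neighbours_def)
  moreover have "inj_on (\<lambda>i. ps ! Suc i) S"
    using dist m by (auto simp: inj_on_def S_def nth_eq_iff_index_eq)
  ultimately have card_S: "card S = card (neighbours E (hd ps))" by (simp add: card_image)
  have "neighbours E (last ps) = (\<lambda>i. ps ! i) ` T"
  proof (intro equalityI subsetI)
    fix u assume u: "u \<in> neighbours E (last ps)"
    then obtain j where j: "j < length ps" "ps ! j = u" using assms(5) by (metis in_set_conv_nth subsetD)
    moreover have "j \<noteq> m" using j u last not_in_neighbours_self[OF assms(3)] by metis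
    ultimately show "u \<in> (\<lambda>i. ps ! i) ` T" using u m by (auto simp: T_def neighbours_def)
  qed (auto simp: T_def neighbours_def)
  moreover have "inj_on (\<lambda>i. ps ! i) T"
    using dist m by (auto simp: inj_on_def T_def nth_eq_iff_index_eq)
  ultimately have card_T: "card T = card (neighbours E (last ps))" by (simp add: card_image)
  have "card (S \<union> T) \<le> m"
    using card_mono[of "{..<m}" "S \<union> T"] by (auto simp: S_def T_def)
  moreover have "card S + card T = card (S \<union> T) + card (S \<inter> T)"
    by (rule card_Un_Int) (simp_all add: S_def T_def)
  ultimately have "S \<inter> T \<noteq> {}" using card_S card_T assms(6) m by auto
  then show ?thesis using m by (auto simp: S_def T_def)
qed

lemma longest_path_closed_under_neighbours:
  assumes "longest_path E V ps" "ps \<noteq> []" "E \<subseteq> {e. e \<subseteq> V \<and> card e = 2}"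
    and "length ps \<le> card (neighbours E (hd ps)) + card (neighbours E (last ps))"
  shows "\<forall>x\<in>set ps. neighbours E x \<subseteq> set ps"
proof -
  have edges: "\<forall>e\<in>E. e \<subseteq> V" "\<forall>e\<in>E. card e = 2" using assms(3) by auto
  have path: "path E ps" using assms(1) by (simp add: longest_path_def)
  have "neighbours E (hd ps) \<subseteq> set ps"
    using longest_path_hd_neighbours[OF assms(1,2) edges(1)] .
  moreover have "neighbours E (last ps) \<subseteq> set ps"
    using longest_path_hd_neighbours[of E V "rev ps"] assms(1,2) edges(1) by (simp add: hd_rev)
  ultimately obtain i where "Suc i < length ps" "{hd ps, ps ! Suc i} \<in> E" "{last ps, ps ! i} \<in> E"
    using path_crossing_edges_exist[OF path assms(2) edges(2) _ _ assms(4)] by blast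
  then obtain cs where "closed_path E cs" "set cs = set ps"
    using path_crossing_closed_path[OF path] by blast
  then show ?thesis using longest_path_neighbours_of_closed_path[OF assms(1) edges(1)] by blast
qed

lemma incident_edges_closed_set:
  assumes "\<forall>e\<in>E. card e = 2" "\<forall>x\<in>C. neighbours E x \<subseteq> C"
  shows "{e\<in>E. e \<inter> C \<noteq> {}} = {e\<in>E. e \<subseteq> C}"
proof (intro equalityI subsetI)
  fix e assume "e \<in> {e\<in>E. e \<inter> C \<noteq> {}}"
  then have e: "e \<in> E" "e \<inter> C \<noteq> {}" by auto
  then obtain x y where "e = {x, y}" using assms(1) card_2_iff by metis
  moreover have "{y, x} \<in> E" using e calculation by (simp add: insert_commute)
  ultimately show "e \<in> {e\<in>E. e \<subseteq> C}" using e assms(2) by (auto simp: neighbours_def)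
next
  fix e assume "e \<in> {e\<in>E. e \<subseteq> C}"
  moreover from this have "e \<noteq> {}" using assms(1) by force
  ultimately show "e \<in> {e\<in>E. e \<inter> C \<noteq> {}}" by (auto simp: Int_absorb2)
qed

lemma erdos_gallai_sparse_set:
  assumes "finite V" "V \<noteq> {}" "E \<subseteq> {e. e \<subseteq> V \<and> card e = 2}"
    and "\<forall>xs. path E xs \<and> set xs \<subseteq> V \<longrightarrow> length xs \<le> l"
  shows "\<exists>C. C \<noteq> {} \<and> C \<subseteq> V \<and> 2 * card {e\<in>E. e \<inter> C \<noteq> {}} \<le> (l - 1) * card C"
proof -
  have E2: "\<forall>e\<in>E. card e = 2" using assms(3) by auto
  have vertex: ?thesis if "x \<in> V" "2 * card (neighbours E x) \<le> l - 1" for x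
  proof -
    have "{e\<in>E. e \<inter> {x} \<noteq> {}} = {e\<in>E. x \<in> e}" by auto
    then show ?thesis using that card_edges_at_vertex[OF E2] by (intro exI[of _ "{x}"]) auto
  qed
  show ?thesis
  proof (cases "E = {}")
    case True
    with assms(2) vertex show ?thesis by auto
  next
    case False
    then obtain a b where ab: "{a, b} \<in> E" "a \<noteq> b" using E2 by (metis all_not_in_conv card_2_iff)
    then have "path E [a, b]" "set [a, b] \<subseteq> V" using assms(3) by (auto simp: path_def)
    then obtain ps where ps: "longest_path E V ps" "length [a, b] \<le> length ps"
      using longest_path_exists[OF assms(1)] by blast
    then have ne: "ps \<noteq> []" and set_ps: "set ps \<subseteq> V" and len: "length ps \<le> l"
      using assms(4) by (auto simp: longest_path_def)
    consider "2 * card (neighbours E (hd ps)) \<le> l - 1" | "2 * card (neighbours E (last ps)) \<le> l - 1"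
      | "length ps \<le> card (neighbours E (hd ps)) + card (neighbours E (last ps))"
      using len by linarith
    then show ?thesis
    proof cases
      case 3
      let ?C = "set ps"
      have "\<forall>x\<in>?C. neighbours E x \<subseteq> ?C"
        using longest_path_closed_under_neighbours[OF ps(1) ne assms(3) 3] .
      then have "{e\<in>E. e \<inter> ?C \<noteq> {}} = {e\<in>E. e \<subseteq> ?C}"
        using incident_edges_closed_set[OF E2] by blast
      moreover have "card ?C = length ps"
        using ps(1) path_length unfolding longest_path_def by metis
      ultimately have "2 * card {e\<in>E. e \<inter> ?C \<noteq> {}} \<le> card ?C * (card ?C - 1)"
        using card_edges_within[OF _ E2, of ?C] by simp
      also have "\<dots> \<le> card ?C * (l - 1)"
        using len \<open>card ?C = length ps\<close> by (intro mult_le_mono2) simp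
      finally show ?thesis using ne set_ps by (intro exI[of _ ?C]) (auto simp: mult.commute)
    next
      case 1
      then show ?thesis using vertex ne set_ps by (meson hd_in_set subsetD)
    next
      case 2
      then show ?thesis using vertex ne set_ps by (meson last_in_set subsetD)
    qed
  qed
qed

theorem erdos_gallai_path:
  assumes "finite V" "E \<subseteq> {e. e \<subseteq> V \<and> card e = 2}"
    and "\<forall>xs. path E xs \<and> set xs \<subseteq> V \<longrightarrow> length xs \<le> l"
  shows "2 * card E \<le> (l - 1) * card V"
  using assms
proof (induction "card V" arbitrary: V E rule: less_induct)
  case less
  show ?case
  proof (cases "V = {}")
    case True
    then have "E = {}" using less.prems(2) by fastforce
    then show ?thesis by simp
  next
    case False
    then obtain C where C: "C \<noteq> {}" "C \<subseteq> V" "2 * card {e\<in>E. e \<inter> C \<noteq> {}} \<le> (l - 1) * card C"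
      using erdos_gallai_sparse_set[OF less.prems(1) _ less.prems(2,3)] by blast
    let ?E' = "{e\<in>E. e \<inter> C = {}}"
    have "E \<subseteq> Pow V" using less.prems(2) by auto
    then have finE: "finite E" using less.prems(1) by (meson finite_Pow_iff finite_subset)
    have "card (V - C) < card V"
      using C less.prems(1) by (intro psubset_card_mono) auto
    moreover have "?E' \<subseteq> {e. e \<subseteq> V - C \<and> card e = 2}" using less.prems(2) by auto
    moreover have "\<forall>xs. path ?E' xs \<and> set xs \<subseteq> V - C \<longrightarrow> length xs \<le> l"
      using less.prems(3) path_mono[of ?E' E] by blast
    ultimately have IH: "2 * card ?E' \<le> (l - 1) * card (V - C)"
      using less.hyps less.prems(1) by (meson finite_Diff)
    have "E = ?E' \<union> {e\<in>E. e \<inter> C \<noteq> {}}" by auto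
    then have "card E = card ?E' + card {e\<in>E. e \<inter> C \<noteq> {}}"
      using finE by (metis (no_types, lifting) card_Un_disjoint finite_Un disjoint_iff mem_Collect_eq)
    moreover have "card (V - C) + card C = card V"
      using C(2) less.prems(1) card_mono[OF less.prems(1) C(2)]
      by (simp add: card_Diff_subset finite_subset)
    then have "(l - 1) * card (V - C) + (l - 1) * card C = (l - 1) * card V"
      by (metis add_mult_distrib2)
    ultimately show ?thesis using IH C(3) by linarith
  qed
qed

definition link :: "'a set set \<Rightarrow> 'a \<Rightarrow> 'a set set" where
  "link G v = {e\<in>G. e \<subseteq> neighbours G v}"

lemma card_triangles_containing:
  assumes "\<forall>e\<in>G. card e = 2"
  shows "card {T\<in>triangles G. v \<in> T} = card (link G v)"
proof -
  have "insert v ` link G v = {T\<in>triangles G. v \<in> T}"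
  proof (intro equalityI subsetI)
    fix T assume "T \<in> insert v ` link G v"
    then obtain e where e: "e \<in> G" "e \<subseteq> neighbours G v" "T = insert v e" by (auto simp: link_def)
    then obtain a b where ab: "e = {a, b}" "a \<noteq> b" using assms card_2_iff by metis
    have "{v, a} \<in> G" "{v, b} \<in> G" using e ab by (auto simp: neighbours_def)
    moreover from this have "v \<noteq> a" "v \<noteq> b" using assms by fastforce+
    ultimately show "T \<in> {T\<in>triangles G. v \<in> T}"
      unfolding triangles_def using e ab by blast
  next
    fix T assume "T \<in> {T\<in>triangles G. v \<in> T}"
    then obtain a b c where T: "T = {a, b, c}" "a \<noteq> b" "b \<noteq> c" "a \<noteq> c"
      "{a, b} \<in> G" "{b, c} \<in> G" "{a, c} \<in> G" "v \<in> T" by (auto simp: triangles_def)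
    then consider "v = a" | "v = b" | "v = c" by auto
    then show "T \<in> insert v ` link G v"
    proof cases
      case 1
      with T have "{b, c} \<in> link G v" "T = insert v {b, c}" by (auto simp: link_def neighbours_def)
      then show ?thesis by blast
    next
      case 2
      with T have "{a, c} \<in> link G v" "T = insert v {a, c}"
        by (auto simp: link_def neighbours_def insert_commute)
      then show ?thesis by blast
    next
      case 3
      with T have "{a, b} \<in> link G v" "T = insert v {a, b}"
        by (auto simp: link_def neighbours_def insert_commute)
      then show ?thesis by blast
    qed
  qed
  moreover have "inj_on (insert v) (link G v)"
  proof (rule inj_onI)
    fix x y assume "x \<in> link G v" "y \<in> link G v" "insert v x = insert v y"
    moreover from this have "v \<notin> x" "v \<notin> y"
      using not_in_neighbours_self[OF assms, of v] by (auto simp: link_def)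
    ultimately show "x = y" by (metis Diff_insert_absorb)
  qed
  ultimately show ?thesis by (metis card_image)
qed

lemma link_path_cycle:
  assumes "\<forall>e\<in>G. card e = 2" "path (link G v) vs" "set vs \<subseteq> neighbours G v" "vs \<noteq> []"
  shows "has_cycle (Suc (length vs)) G"
  unfolding has_cycle_def
proof (intro exI conjI allI impI)
  let ?L = "length vs"
  show "length (v # vs) = Suc ?L" by simp
  show "distinct (v # vs)"
    using assms(2,3) not_in_neighbours_self[OF assms(1)] by (auto simp: path_def)
  have to_v: "{v, vs ! j} \<in> G" if "j < ?L" for j
    using that assms(3) nth_mem by (fastforce simp: neighbours_def)
  fix i assume i: "i < Suc ?L"
  show "{(v # vs) ! i, (v # vs) ! ((i + 1) mod Suc ?L)} \<in> G"
  proof (cases i)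
    case 0
    then show ?thesis using to_v assms(4) by (simp add: mod_Suc)
  next
    case (Suc j)
    show ?thesis
    proof (cases "Suc j = ?L")
      case True
      then show ?thesis using to_v[of j] Suc True[symmetric] by (simp add: insert_commute)
    next
      case False
      then have "{vs ! j, vs ! Suc j} \<in> link G v"
        using assms(2) Suc i by (intro successively_nth[where P = "\<lambda>x y. {x, y} \<in> link G v"])
          (auto simp: path_def)
      then show ?thesis using Suc i False by (simp add: link_def)
    qed
  qed
qed

lemma link_path_length_less:
  assumes "\<forall>e\<in>G. card e = 2" "\<not> has_cycle (Suc l) G" "0 < l"
    and "path (link G v) vs" "set vs \<subseteq> neighbours G v"
  shows "length vs < l"
proof (rule ccontr)
  assume "\<not> length vs < l"
  then have "length (take l vs) = l" by simp
  moreover have "path (link G v) (take l vs)" using assms(4) by (rule path_take)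
  moreover have "set (take l vs) \<subseteq> neighbours G v" using assms(5) set_take_subset by fastforce
  ultimately have "has_cycle (Suc l) G" using link_path_cycle[OF assms(1)] assms(3) by fastforce
  with assms(2) show False ..
qed

lemma finite_graphs_on: "finite (graphs_on n)"
proof -
  have "{e. e \<subseteq> {..<n} \<and> card e = 2} \<subseteq> Pow {..<n}" by auto
  then have "finite {e. e \<subseteq> {..<n} \<and> card e = 2}" by (rule finite_subset) simp
  then show ?thesis by (simp add: graphs_on_def)
qed

lemma num_triangles_le_link_paths:
  assumes "G \<in> graphs_on n"
    and "\<And>v xs. path (link G v) xs \<Longrightarrow> set xs \<subseteq> neighbours G v \<Longrightarrow> length xs \<le> l"
  shows "3 * num_triangles G \<le> (l - 1) * card G"
proof -
  have G: "\<forall>e\<in>G. e \<subseteq> {..<n} \<and> card e = 2" using assms(1) by (auto simp: graphs_on_def)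
  then have E2: "\<forall>e\<in>G. card e = 2" by blast
  have finG: "finite G" using assms(1) finite_graphs_on[of n] by (simp add: graphs_on_def finite_subset)
  have "neighbours G v \<subseteq> {..<n}" for v using G by (auto simp: neighbours_def)
  then have finN: "finite (neighbours G v)" for v by (meson finite_lessThan finite_subset)
  have link_bound: "2 * card (link G v) \<le> (l - 1) * card (neighbours G v)" for v
    using E2 assms(2) by (intro erdos_gallai_path[OF finN]) (auto simp: link_def)
  have "triangles G \<subseteq> Pow {..<n}" using G by (auto simp: triangles_def)
  then have tri: "\<forall>T\<in>triangles G. T \<subseteq> {..<n}" "finite (triangles G)"
    by (auto intro: finite_subset)
  have "card T = 3" if "T \<in> triangles G" for T using that by (auto simp: triangles_def)
  then have "2 * (3 * num_triangles G) = 2 * (\<Sum>T\<in>triangles G. card T)"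
    by (simp add: num_triangles_def)
  also have "\<dots> = (\<Sum>v<n. 2 * card (link G v))"
    using sum_card_containing[OF _ tri(2,1)] card_triangles_containing[OF E2]
    by (simp add: sum_distrib_left[symmetric])
  also have "\<dots> \<le> (\<Sum>v<n. (l - 1) * card (neighbours G v))"
    by (intro sum_mono link_bound)
  also have "\<dots> = (l - 1) * (\<Sum>e\<in>G. card e)"
    using sum_card_containing[OF _ finG, of "{..<n}"] G card_edges_at_vertex[OF E2]
    by (simp add: sum_distrib_left[symmetric])
  also have "\<dots> = 2 * ((l - 1) * card G)" using E2 by simp
  finally show ?thesis by linarith
qed

lemma num_triangles_cycle_free:
  assumes "G \<in> graphs_on n" "cycle_free (2 * k) G" "2 \<le> k"
  shows "3 * num_triangles G \<le> (2 * k - 3) * card G"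
proof -
  have "\<forall>e\<in>G. card e = 2" using assms(1) by (auto simp: graphs_on_def)
  moreover have "\<not> has_cycle (Suc (2 * k - 1)) G" using assms(2,3) by (simp add: cycle_free_def)
  ultimately have "length xs \<le> 2 * k - 2"
    if "path (link G v) xs" "set xs \<subseteq> neighbours G v" for v xs
    using link_path_length_less[OF _ _ _ that] assms(3) by fastforce
  then have "3 * num_triangles G \<le> (2 * k - 2 - 1) * card G"
    by (rule num_triangles_le_link_paths[OF assms(1)])
  then show ?thesis by (simp add: numeral_3_eq_3)
qed

theorem theorem1:
  fixes k n :: nat
  assumes "k \<ge> 2" and "n \<ge> 1"
  shows "real (t_cyc (2 * k) n) \<le> (real (2 * k) - 3) / 3 * real (ex_cyc n (2 * k))"
proof -
  let ?S = "{G \<in> graphs_on n. cycle_free (2 * k) G}"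
  have fin: "finite ?S" using finite_graphs_on by simp
  \<comment> \<open>the empty graph keeps the maxima in t_cyc and ex_cyc away from Max {}\<close>
  have "cycle_free (2 * k) {}" using assms(1) unfolding cycle_free_def has_cycle_def by force
  then have "{} \<in> ?S" by (simp add: graphs_on_def)
  then have "t_cyc (2 * k) n \<in> num_triangles ` ?S"
    unfolding t_cyc_def using fin by (intro Max_in) auto
  then obtain G where G: "G \<in> ?S" "t_cyc (2 * k) n = num_triangles G" by auto
  have "card G \<le> ex_cyc n (2 * k)" unfolding ex_cyc_def using fin G(1) by (intro Max_ge) auto
  moreover have "3 * t_cyc (2 * k) n \<le> (2 * k - 3) * card G"
    using G num_triangles_cycle_free assms(1) by auto
  ultimately have "3 * t_cyc (2 * k) n \<le> (2 * k - 3) * ex_cyc n (2 * k)"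
    by (meson le_trans mult_le_mono2)
  then have "3 * real (t_cyc (2 * k) n) \<le> real (2 * k - 3) * real (ex_cyc n (2 * k))"
    by (metis of_nat_le_iff of_nat_mult of_nat_numeral)
  moreover have "real (2 * k - 3) = real (2 * k) - 3" using assms(1) by simp
  ultimately show ?thesis by simp
qed

end
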